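(* Let $\kappa$ be an uncountable cardinal with $\kappa^{<\kappa}=\kappa$. If $\mathfrak{d}_\kappa<{\rm cf}(2^\kappa)$, then $\mathrm{Gal}(\mathcal{D}_\kappa,2^\kappa,2^\kappa)$ holds.
   Context: $\mathcal{D}_\kappa$ is the club filter on $\kappa$. $\mathrm{Gal}(\mathcal{F},\mu,\lambda)$: for every $\mathcal{C}\subseteq\mathcal{F}$ with $|\mathcal{C}|=\lambda$ there is $\mathcal{E}\subseteq\mathcal{C}$ with $|\mathcal{E}|=\mu$ and $\bigcap\mathcal{E}\in\mathcal{F}$. For $f,g\in{}^\kappa\kappa$, $f\leq^*g$ means $|\{\alpha<\kappa\mid f(\alpha)>g(\alpha)\}|<\kappa$; $\mathfrak{d}_\kappa$ is the least size of a family $\mathcal{D}\subseteq{}^\kappa\kappa$ such that every $f\in{}^\kappa\kappa$ satisfies $f\leq^*g$ for some $g\in\mathcal{D}$. *)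

theory Defs
  imports Main "HOL-Library.FuncSet" "HOL-Library.Countable_Set"
begin

unbundle cardinal_syntax

text \<open>A cardinal kappa is represented by a cardinal order r (an initial ordinal) on
the set Field r; ordinals below kappa are the elements of Field r.\<close>

definition strict_less :: "'a rel \<Rightarrow> 'a \<Rightarrow> 'a \<Rightarrow> bool" where
  "strict_less r a b \<longleftrightarrow> (a, b) \<in> r \<and> a \<noteq> b"

definition unbounded_in :: "'a rel \<Rightarrow> 'a set \<Rightarrow> bool" where
  "unbounded_in r C \<longleftrightarrow> (\<forall>a\<in>Field r. \<exists>c\<in>C. strict_less r a c)"

definition closed_in :: "'a rel \<Rightarrow> 'a set \<Rightarrow> bool" where
  "closed_in r C \<longleftrightarrow> (\<forall>\<alpha>\<in>Field r.
      (C \<inter> underS r \<alpha> \<noteq> {} \<and>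
       (\<forall>\<beta>\<in>underS r \<alpha>. \<exists>\<gamma>\<in>C \<inter> underS r \<alpha>. strict_less r \<beta> \<gamma>))
      \<longrightarrow> \<alpha> \<in> C)"

definition club :: "'a rel \<Rightarrow> 'a set \<Rightarrow> bool" where
  "club r C \<longleftrightarrow> C \<subseteq> Field r \<and> unbounded_in r C \<and> closed_in r C"

definition club_filter :: "'a rel \<Rightarrow> 'a set set" where
  "club_filter r = {X. X \<subseteq> Field r \<and> (\<exists>C. club r C \<and> C \<subseteq> X)}"

text \<open>Gal(F, mu, lambda), cardinals mu and lambda given as cardinalities of sets.\<close>
definition Gal :: "'a set set \<Rightarrow> 'b set \<Rightarrow> 'c set \<Rightarrow> bool" where
  "Gal F M L \<longleftrightarrow> (\<forall>C. C \<subseteq> F \<and> |C| =o |L| \<longrightarrow>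
      (\<exists>E. E \<subseteq> C \<and> |E| =o |M| \<and> \<Inter>E \<in> F))"

text \<open>kappa^{<kappa}: the set of all functions alpha -> kappa for alpha < kappa (tagged by alpha).\<close>
definition short_functions :: "'a rel \<Rightarrow> ('a \<times> ('a \<Rightarrow> 'a)) set" where
  "short_functions r = Sigma (Field r) (\<lambda>\<alpha>. underS r \<alpha> \<rightarrow>\<^sub>E Field r)"

definition le_star :: "'a rel \<Rightarrow> ('a \<Rightarrow> 'a) \<Rightarrow> ('a \<Rightarrow> 'a) \<Rightarrow> bool" where
  "le_star r f g \<longleftrightarrow> |{\<alpha>\<in>Field r. strict_less r (g \<alpha>) (f \<alpha>)}| <o |Field r|"

definition dominating :: "'a rel \<Rightarrow> ('a \<Rightarrow> 'a) set \<Rightarrow> bool" where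
  "dominating r D \<longleftrightarrow> D \<subseteq> (Field r \<rightarrow>\<^sub>E Field r) \<and>
     (\<forall>f\<in>Field r \<rightarrow>\<^sub>E Field r. \<exists>g\<in>D. le_star r f g)"

definition cofinal_subset :: "'b rel \<Rightarrow> 'b set \<Rightarrow> bool" where
  "cofinal_subset w S \<longleftrightarrow> S \<subseteq> Field w \<and> (\<forall>x\<in>Field w. \<exists>y\<in>S. (x, y) \<in> w)"

text \<open>d_kappa < cf(2^kappa): some dominating family is strictly smaller than every cofinal
subset of the initial ordinal 2^kappa (= card_of (Pow kappa)).\<close>
definition d_less_cf_pow :: "'a rel \<Rightarrow> bool" where
  "d_less_cf_pow r \<longleftrightarrow> (\<exists>D. dominating r D \<and>
     (\<forall>S. cofinal_subset (card_of (Pow (Field r))) S \<longrightarrow> |D| <o |S| ))"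

end

theory Submission
  imports Defs
begin

(* The hypothesis kappa^{<kappa} = kappa is used only to make kappa regular, by a Koenig-style
   diagonal argument. For regular uncountable kappa, every club C contains a club of closure points
   C(g, beta) = {alpha > beta. g[alpha] \<subseteq> alpha} with g taken from a fixed dominating family D:
   it suffices that g dominates, from beta on, a function sending xi to an element of C above xi.
   So the club filter has a base indexed by D \<times> kappa, of size d_kappa < cf(2^kappa). Given 2^kappa
   clubs, assign to each a base set it contains; since 2^kappa is not a union of fewer than
   cf(2^kappa) sets of size < 2^kappa, one base set lies inside 2^kappa of the clubs, hence inside
   their intersection. *)

lemma strict_less_iff_underS: "strict_less r a b \<longleftrightarrow> a \<in> underS r b"
  unfolding strict_less_def underS_def by auto

lemma strict_less_Field: "strict_less r a b \<Longrightarrow> a \<in> Field r \<and> b \<in> Field r"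
  unfolding strict_less_def by (auto intro: FieldI1 FieldI2)

lemma strict_less_le_trans:
  assumes wo: "Well_order r" and ab: "strict_less r a b" and bc: "(b, c) \<in> r"
  shows "strict_less r a c"
proof -
  have "trans r" "antisym r" using wo by (simp_all add: order_on_defs)
  then show ?thesis using ab bc unfolding strict_less_def by (metis antisymD transD)
qed

lemma le_strict_less_trans:
  assumes wo: "Well_order r" and ab: "(a, b) \<in> r" and bc: "strict_less r b c"
  shows "strict_less r a c"
proof -
  have "trans r" "antisym r" using wo by (simp_all add: order_on_defs)
  then show ?thesis using ab bc unfolding strict_less_def by (metis antisymD transD)
qed

lemma strict_less_trans:
  "Well_order r \<Longrightarrow> strict_less r a b \<Longrightarrow> strict_less r b c \<Longrightarrow> strict_less r a c"
  using strict_less_le_trans strict_less_def by metis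

lemma not_strict_less_iff:
  assumes wo: "Well_order r" and a: "a \<in> Field r" and b: "b \<in> Field r"
  shows "\<not> strict_less r a b \<longleftrightarrow> (b, a) \<in> r"
proof -
  have "refl_on (Field r) r" "total_on (Field r) r" "antisym r"
    using wo by (simp_all add: order_on_defs)
  then show ?thesis using a b unfolding strict_less_def
    by (metis antisymD refl_onD total_on_def)
qed

lemma finite_ordLess_infinite2: "finite A \<Longrightarrow> infinite B \<Longrightarrow> |A| <o |B|"
  using finite_ordLess_infinite[OF card_of_Well_order card_of_Well_order] by (simp add: Field_card_of)

lemma card_of_Times_same_ordLess_infinite:
  assumes C: "infinite C" and A: "|A| <o |C|"
  shows "|A \<times> A| <o |C|"
proof (cases "finite A")
  case True
  then have "finite (A \<times> A)" by simp
  then show ?thesis using C by (rule finite_ordLess_infinite2)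
next
  case False
  then have "|A \<times> A| =o |A|" by (rule card_of_Times_same_infinite)
  then show ?thesis using A by (rule ordIso_ordLess_trans)
qed

lemma card_of_Times_ordLess_infinite:
  assumes C: "infinite C" and A: "|A| <o |C|" and B: "|B| <o |C|"
  shows "|A \<times> B| <o |C|"
proof (cases "|A| \<le>o |B|")
  case True
  then have "|A \<times> B| \<le>o |B \<times> B|" by (rule card_of_Times_mono1)
  then show ?thesis using card_of_Times_same_ordLess_infinite[OF C B] by (rule ordLeq_ordLess_trans)
next
  case False
  then have "|B| <o |A|" using ordLess_or_ordLeq[OF card_of_Well_order card_of_Well_order] by blast
  then have "|A \<times> B| \<le>o |A \<times> A|" by (intro card_of_Times_mono2 ordLess_imp_ordLeq)
  then show ?thesis using card_of_Times_same_ordLess_infinite[OF C A] by (rule ordLeq_ordLess_trans)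
qed

lemma countable_ordLess_uncountable:
  assumes A: "countable A" and B: "\<not> countable B"
  shows "|A| <o |B|"
proof (rule ccontr)
  assume "\<not> |A| <o |B|"
  then have "|B| \<le>o |A|" using ordLess_or_ordLeq[OF card_of_Well_order card_of_Well_order] by blast
  then obtain f where f: "inj_on f B" "f ` B \<subseteq> A" using card_of_ordLeq[of B A] by auto
  have "countable (f ` B)" using countable_subset[OF f(2) A] .
  then have "countable B" using f(1) by (rule countable_image_inj_on)
  with B show False by contradiction
qed

lemma card_of_ordLess_Field_iff: "Card_order r \<Longrightarrow> |A| <o |Field r| \<longleftrightarrow> |A| <o r"
  using card_of_Field_ordIso ordLess_ordIso_trans ordIso_symmetric by blast

lemma card_of_under_ordLess:
  assumes r: "Card_order r" and inf: "infinite (Field r)" and a: "a \<in> Field r"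
  shows "|under r a| <o |Field r|"
proof -
  have wo: "Well_order r" using r card_order_on_well_order_on by blast
  obtain b where b: "b \<in> Field r" "strict_less r a b"
    using infinite_Card_order_limit[OF r inf a] unfolding strict_less_def by blast
  have "under r a \<subseteq> underS r b"
    using le_strict_less_trans[OF wo _ b(2)] by (auto simp: under_def strict_less_iff_underS)
  then have "|under r a| \<le>o |underS r b|" by (rule card_of_mono1)
  also have "|underS r b| <o r" using card_of_underS[OF r b(1)] .
  finally show ?thesis using card_of_ordLess_Field_iff[OF r] by blast
qed

lemma card_of_ordLeq_underS_if_ordLess:
  assumes r: "Card_order r" and A: "|A| <o |Field r|"
  shows "\<exists>\<alpha>\<in>Field r. |A| \<le>o |underS r \<alpha>|"
proof -
  have wo: "Well_order r" using r card_order_on_well_order_on by blast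
  obtain \<alpha> where \<alpha>: "\<alpha> \<in> Field r" and iso: "|A| =o Restr r (underS r \<alpha>)"
    using A ordLess_iff_ordIso_Restr[OF wo card_of_Well_order] card_of_ordLess_Field_iff[OF r]
    by blast
  have "Field (Restr r (underS r \<alpha>)) = underS r \<alpha>"
    using wo wo_rel.underS_ofilter Field_Restr_ofilter unfolding wo_rel_def by fastforce
  then have "|A| \<le>o |underS r \<alpha>|"
    using card_of_mono2[OF ordIso_imp_ordLeq[OF iso]] by (simp add: Field_card_of)
  then show ?thesis using \<alpha> by blast
qed

section \<open>Regularity\<close>

lemma card_of_funcset_underS_ordLeq:
  assumes sf: "|short_functions r| =o |Field r|" and \<alpha>: "\<alpha> \<in> Field r"
  shows "|underS r \<alpha> \<rightarrow>\<^sub>E Field r| \<le>o |Field r|"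
proof -
  have "inj_on (Pair \<alpha>) (underS r \<alpha> \<rightarrow>\<^sub>E Field r)"
    and "Pair \<alpha> ` (underS r \<alpha> \<rightarrow>\<^sub>E Field r) \<subseteq> short_functions r"
    using \<alpha> unfolding short_functions_def inj_on_def by auto
  then have "|underS r \<alpha> \<rightarrow>\<^sub>E Field r| \<le>o |short_functions r|" using card_of_ordLeq by blast
  then show ?thesis using sf by (rule ordLeq_ordIso_trans)
qed

lemma cofinal_not_small_if_short_functions:
  assumes r: "Card_order r" and inf: "infinite (Field r)"
    and sf: "|short_functions r| =o |Field r|"
    and X: "X \<subseteq> Field r" "cofinal X r"
  shows "\<not> |X| <o |Field r|"
proof
  let ?K = "Field r"
  assume "|X| <o |?K|"
  then obtain \<alpha> where \<alpha>: "\<alpha> \<in> ?K" and le: "|X| \<le>o |underS r \<alpha>|"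
    using card_of_ordLeq_underS_if_ordLess[OF r] by blast
  obtain k where k: "k \<in> ?K" using infinite_imp_nonempty[OF inf] by blast
  then have "X \<noteq> {}" using X(2) unfolding cofinal_def by blast
  then obtain \<pi> where \<pi>: "\<pi> ` underS r \<alpha> = X" using iffD2[OF card_of_ordLeq2 le] by blast
  let ?FS = "underS r \<alpha> \<rightarrow>\<^sub>E ?K"
  have "(\<lambda>i\<in>underS r \<alpha>. k) \<in> ?FS" using k by auto
  then have "?FS \<noteq> {}" by blast
  then obtain F where F: "F ` ?K = ?FS"
    using iffD2[OF card_of_ordLeq2 card_of_funcset_underS_ordLeq[OF sf \<alpha>]] by blast
  \<comment> \<open>Diagonalise against the enumeration F: at coordinate i avoid all F xi with xi \<le> pi i.
    Since X is cofinal, every xi lies below some pi i, so the diagonal function is no F xi.\<close>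
  have "\<exists>y\<in>?K. \<forall>\<xi>\<in>under r (\<pi> i). F \<xi> i \<noteq> y" if i: "i \<in> underS r \<alpha>" for i
  proof (rule ccontr)
    assume "\<not> ?thesis"
    then have "?K \<subseteq> (\<lambda>\<xi>. F \<xi> i) ` under r (\<pi> i)" by (auto simp: image_iff)
    then have "|?K| \<le>o |under r (\<pi> i)|"
      using ordLeq_transitive[OF card_of_mono1 card_of_image] by blast
    moreover have "|under r (\<pi> i)| <o |?K|"
      using card_of_under_ordLess[OF r inf] \<pi> i X(1) by blast
    ultimately show False using not_ordLess_ordLeq by blast
  qed
  then obtain h where h: "\<And>i. i \<in> underS r \<alpha> \<Longrightarrow> h i \<in> ?K \<and> (\<forall>\<xi>\<in>under r (\<pi> i). F \<xi> i \<noteq> h i)"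
    by metis
  have "restrict h (underS r \<alpha>) \<in> ?FS" using h by auto
  then obtain \<xi> where \<xi>: "\<xi> \<in> ?K" "F \<xi> = restrict h (underS r \<alpha>)" using F by (metis imageE)
  obtain x where x: "x \<in> X" "(\<xi>, x) \<in> r" using X(2) \<xi>(1) unfolding cofinal_def by blast
  obtain i where i: "i \<in> underS r \<alpha>" "\<pi> i = x" using \<pi> x(1) by blast
  have "\<xi> \<in> under r (\<pi> i)" using x(2) i(2) by (simp add: under_def)
  moreover have "F \<xi> i = h i" using \<xi>(2) i(1) by simp
  ultimately show False using h[OF i(1)] by blast
qed

lemma regularCard_if_short_functions:
  assumes r: "Card_order r" and inf: "infinite (Field r)"
    and sf: "|short_functions r| =o |Field r|"
  shows "regularCard r"
  unfolding regularCard_def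
proof (intro allI impI)
  fix X assume X: "X \<subseteq> Field r \<and> cofinal X r"
  then have "|X| \<le>o r"
    using card_of_mono1 card_of_Field_ordIso[OF r] ordLeq_ordIso_trans by blast
  moreover have "\<not> |X| <o r"
    using cofinal_not_small_if_short_functions[OF r inf sf] X card_of_ordLess_Field_iff[OF r]
    by blast
  ultimately show "|X| =o r" using ordLeq_iff_ordLess_or_ordIso by blast
qed

lemma regularCard_bounded:
  assumes r: "Card_order r" and inf: "infinite (Field r)" and reg: "regularCard r"
    and X: "X \<subseteq> Field r" "|X| <o |Field r|"
  shows "\<exists>\<alpha>\<in>Field r. X \<subseteq> underS r \<alpha>"
proof (rule regularCard_UNION[OF r reg])
  have wo: "Well_order r" using r card_order_on_well_order_on by blast
  show "relChain r (underS r)"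
    unfolding relChain_def
  proof (intro allI impI subsetI)
    fix i j x assume ij: "(i, j) \<in> r" and x: "x \<in> underS r i"
    have "strict_less r x i" using x by (simp add: strict_less_iff_underS)
    then have "strict_less r x j" using ij by (rule strict_less_le_trans[OF wo])
    then show "x \<in> underS r j" by (simp add: strict_less_iff_underS)
  qed
  show "X \<subseteq> (\<Union>\<alpha>\<in>Field r. underS r \<alpha>)"
    using X(1) infinite_Card_order_limit[OF r inf] by (fastforce simp: underS_def)
  show "|X| <o r" using X(2) card_of_ordLess_Field_iff[OF r] by blast
qed

lemma countable_bounded:
  assumes r: "Card_order r" and unc: "\<not> countable (Field r)" and reg: "regularCard r"
    and X: "X \<subseteq> Field r" "countable X"
  shows "\<exists>\<alpha>\<in>Field r. X \<subseteq> underS r \<alpha>"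
  using regularCard_bounded[OF r _ reg X(1)] countable_ordLess_uncountable[OF X(2) unc] unc
    countable_finite by blast

lemma countable_sequence_sup:
  fixes s :: "nat \<Rightarrow> 'a"
  assumes r: "Card_order r" and unc: "\<not> countable (Field r)" and reg: "regularCard r"
    and s: "range s \<subseteq> Field r"
  shows "\<exists>\<alpha>\<in>Field r. (\<forall>n. (s n, \<alpha>) \<in> r) \<and>
    (\<forall>\<xi>. strict_less r \<xi> \<alpha> \<longrightarrow> (\<exists>n. strict_less r \<xi> (s n)))"
proof -
  have wo: "Well_order r" using r card_order_on_well_order_on by blast
  then have wor: "wo_rel r" by (simp add: wo_rel_def)
  define UB where "UB = {y \<in> Field r. \<forall>n. (s n, y) \<in> r}"
  have UB: "UB \<subseteq> Field r" unfolding UB_def by blast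
  have "countable (range s)" by simp
  then obtain u where "u \<in> Field r" "range s \<subseteq> underS r u"
    using countable_bounded[OF r unc reg s] by blast
  then have "u \<in> UB" unfolding UB_def underS_def by blast
  define \<alpha> where "\<alpha> = wo_rel.minim r UB"
  have \<alpha>: "\<alpha> \<in> UB" unfolding \<alpha>_def using wo_rel.minim_in[OF wor UB] \<open>u \<in> UB\<close> by blast
  then have \<alpha>K: "\<alpha> \<in> Field r" using UB by blast
  have "\<exists>n. strict_less r \<xi> (s n)" if \<xi>: "strict_less r \<xi> \<alpha>" for \<xi>
  proof -
    have \<xi>K: "\<xi> \<in> Field r" using strict_less_Field[OF \<xi>] by blast
    have "\<xi> \<notin> UB"
    proof
      assume "\<xi> \<in> UB"
      then have "(\<alpha>, \<xi>) \<in> r" unfolding \<alpha>_def by (rule wo_rel.minim_least[OF wor UB])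
      then show False using not_strict_less_iff[OF wo \<xi>K \<alpha>K] \<xi> by blast
    qed
    then obtain n where n: "(s n, \<xi>) \<notin> r" using \<xi>K unfolding UB_def by blast
    have "s n \<in> Field r" using s by blast
    then have "strict_less r \<xi> (s n)" using n not_strict_less_iff[OF wo \<xi>K] by blast
    then show ?thesis by blast
  qed
  then show ?thesis using \<alpha> unfolding UB_def by blast
qed

section \<open>Clubs of closure points\<close>

definition closure_points_above :: "'a rel \<Rightarrow> ('a \<Rightarrow> 'a) \<Rightarrow> 'a \<Rightarrow> 'a set" where
  "closure_points_above r g \<beta> = {\<alpha> \<in> Field r. strict_less r \<beta> \<alpha> \<and>
     (\<forall>\<xi>. strict_less r \<xi> \<alpha> \<longrightarrow> strict_less r (g \<xi>) \<alpha>)}"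

lemma closed_in_closure_points_above:
  assumes wo: "Well_order r"
  shows "closed_in r (closure_points_above r g \<beta>)"
  unfolding closed_in_def
proof (intro ballI impI)
  let ?C = "closure_points_above r g \<beta>"
  fix \<alpha> assume \<alpha>: "\<alpha> \<in> Field r"
    and lim: "?C \<inter> underS r \<alpha> \<noteq> {} \<and>
      (\<forall>\<beta>'\<in>underS r \<alpha>. \<exists>\<gamma>\<in>?C \<inter> underS r \<alpha>. strict_less r \<beta>' \<gamma>)"
  obtain \<gamma> where "\<gamma> \<in> ?C" "\<gamma> \<in> underS r \<alpha>" using lim by blast
  then have "\<gamma> \<in> ?C" "strict_less r \<gamma> \<alpha>" by (simp_all add: strict_less_iff_underS)
  then have "strict_less r \<beta> \<alpha>"
    using strict_less_trans[OF wo] unfolding closure_points_above_def by blast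
  moreover have "strict_less r (g \<xi>) \<alpha>" if "strict_less r \<xi> \<alpha>" for \<xi>
  proof -
    have "\<xi> \<in> underS r \<alpha>" using that by (simp add: strict_less_iff_underS)
    then obtain \<delta> where "\<delta> \<in> ?C" "\<delta> \<in> underS r \<alpha>" "strict_less r \<xi> \<delta>" using lim by blast
    then have "\<delta> \<in> ?C" "strict_less r \<delta> \<alpha>" "strict_less r \<xi> \<delta>"
      by (simp_all add: strict_less_iff_underS)
    then show ?thesis using strict_less_trans[OF wo] unfolding closure_points_above_def by blast
  qed
  ultimately show "\<alpha> \<in> ?C" using \<alpha> unfolding closure_points_above_def by blast
qed

lemma unbounded_in_closure_points_above:
  assumes r: "Card_order r" and unc: "\<not> countable (Field r)" and reg: "regularCard r"
    and g: "\<And>\<xi>. \<xi> \<in> Field r \<Longrightarrow> g \<xi> \<in> Field r" and \<beta>: "\<beta> \<in> Field r"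
  shows "unbounded_in r (closure_points_above r g \<beta>)"
proof -
  let ?K = "Field r"
  have wo: "Well_order r" using r card_order_on_well_order_on by blast
  have inf: "infinite ?K" using unc countable_finite by blast
  define S where "S x = insert x (insert \<beta> (g ` underS r x))" for x
  have "\<exists>y\<in>?K. S x \<subseteq> underS r y" if x: "x \<in> ?K" for x
  proof (rule regularCard_bounded[OF r inf reg])
    show "S x \<subseteq> ?K" using x \<beta> g unfolding S_def by (auto simp: underS_def intro: FieldI1)
    have "|underS r x| <o |?K|" using card_of_underS[OF r x] card_of_ordLess_Field_iff[OF r] by blast
    then have "|g ` underS r x| <o |?K|" by (rule ordLeq_ordLess_trans[OF card_of_image])
    moreover have "|{x, \<beta>}| <o |?K|" by (rule finite_ordLess_infinite2[OF _ inf]) simp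
    ultimately have "|{x, \<beta>} \<union> g ` underS r x| <o |?K|"
      using card_of_Un_ordLess_infinite[OF inf] by blast
    then show "|S x| <o |?K|" unfolding S_def by simp
  qed
  then have "\<forall>x\<in>?K. \<exists>y. y \<in> ?K \<and> S x \<subseteq> underS r y" by blast
  from bchoice[OF this] obtain next_point
    where nxt: "\<forall>x\<in>?K. next_point x \<in> ?K \<and> S x \<subseteq> underS r (next_point x)"
    by blast
  show ?thesis
    unfolding unbounded_in_def
  proof
    fix a assume a: "a \<in> ?K"
    define s where "s n = (next_point ^^ n) a" for n
    have sK: "s n \<in> ?K" for n by (induction n) (simp_all add: s_def a nxt)
    have s_Suc: "S (s n) \<subseteq> underS r (s (Suc n))" for n
      using nxt sK[of n] by (simp add: s_def)
    have "range s \<subseteq> ?K" using sK by blast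
    then obtain \<alpha> where \<alpha>: "\<alpha> \<in> ?K" "\<And>n. (s n, \<alpha>) \<in> r"
      and approx: "\<And>\<xi>. strict_less r \<xi> \<alpha> \<Longrightarrow> \<exists>n. strict_less r \<xi> (s n)"
      using countable_sequence_sup[OF r unc reg] by blast
    have below: "strict_less r y \<alpha>" if "y \<in> S (s n)" for y n
    proof -
      have "strict_less r y (s (Suc n))" using that s_Suc[of n] by (auto simp: strict_less_iff_underS)
      then show ?thesis using \<alpha>(2) by (rule strict_less_le_trans[OF wo])
    qed
    have "strict_less r (g \<xi>) \<alpha>" if \<xi>: "strict_less r \<xi> \<alpha>" for \<xi>
    proof -
      obtain n where "\<xi> \<in> underS r (s n)"
        using approx[OF \<xi>] by (auto simp: strict_less_iff_underS)
      then have "g \<xi> \<in> S (s n)" unfolding S_def by blast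
      then show ?thesis by (rule below)
    qed
    moreover have "a \<in> S (s 0)" "\<beta> \<in> S (s 0)" by (simp_all add: S_def s_def)
    then have "strict_less r \<beta> \<alpha>" "strict_less r a \<alpha>" using below by blast+
    ultimately show "\<exists>c\<in>closure_points_above r g \<beta>. strict_less r a c"
      using \<alpha>(1) unfolding closure_points_above_def by blast
  qed
qed

lemma club_closure_points_above:
  assumes r: "Card_order r" and unc: "\<not> countable (Field r)" and reg: "regularCard r"
    and g: "\<And>\<xi>. \<xi> \<in> Field r \<Longrightarrow> g \<xi> \<in> Field r" and \<beta>: "\<beta> \<in> Field r"
  shows "club r (closure_points_above r g \<beta>)"
proof -
  have "closure_points_above r g \<beta> \<subseteq> Field r" unfolding closure_points_above_def by blast
  then show ?thesis
    using closed_in_closure_points_above[OF card_order_on_well_order_on[OF r]]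
      unbounded_in_closure_points_above[of r g \<beta>, OF r unc reg g \<beta>]
    unfolding club_def by blast
qed

lemma closure_points_above_subset_club:
  assumes wo: "Well_order r" and C: "club r C"
    and f: "\<And>\<xi>. \<xi> \<in> Field r \<Longrightarrow> f \<xi> \<in> C \<and> strict_less r \<xi> (f \<xi>)"
    and fg: "\<And>\<xi>. \<xi> \<in> Field r \<Longrightarrow> \<not> strict_less r \<xi> \<beta> \<Longrightarrow> \<not> strict_less r (g \<xi>) (f \<xi>)"
  shows "closure_points_above r g \<beta> \<subseteq> C"
proof
  fix \<alpha> assume "\<alpha> \<in> closure_points_above r g \<beta>"
  then have \<alpha>: "\<alpha> \<in> Field r" "strict_less r \<beta> \<alpha>"
    and g\<alpha>: "\<And>\<xi>. strict_less r \<xi> \<alpha> \<Longrightarrow> strict_less r (g \<xi>) \<alpha>"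
    unfolding closure_points_above_def by blast+
  have CK: "C \<subseteq> Field r" using C unfolding club_def by blast
  have f_below: "f \<xi> \<in> C \<inter> underS r \<alpha> \<and> strict_less r \<xi> (f \<xi>)"
    if \<xi>: "strict_less r \<xi> \<alpha>" "\<not> strict_less r \<xi> \<beta>" for \<xi>
  proof -
    have \<xi>K: "\<xi> \<in> Field r" using strict_less_Field[OF \<xi>(1)] by blast
    have "(f \<xi>, g \<xi>) \<in> r"
      using fg[OF \<xi>K \<xi>(2)] not_strict_less_iff[OF wo] strict_less_Field[OF g\<alpha>[OF \<xi>(1)]]
        f[OF \<xi>K] CK by blast
    then have "strict_less r (f \<xi>) \<alpha>" using g\<alpha>[OF \<xi>(1)] by (rule le_strict_less_trans[OF wo])
    then show ?thesis using f[OF \<xi>K] by (simp add: strict_less_iff_underS)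
  qed
  have f\<beta>: "f \<beta> \<in> C \<inter> underS r \<alpha>" "strict_less r \<beta> (f \<beta>)"
    using f_below[OF \<alpha>(2)] by (simp_all add: strict_less_def)
  have "\<exists>\<gamma>\<in>C \<inter> underS r \<alpha>. strict_less r \<delta> \<gamma>" if "\<delta> \<in> underS r \<alpha>" for \<delta>
  proof (cases "strict_less r \<delta> \<beta>")
    case True
    then show ?thesis using f\<beta> strict_less_trans[OF wo] by blast
  next
    case False
    then show ?thesis using f_below that by (auto simp: strict_less_iff_underS)
  qed
  then show "\<alpha> \<in> C" using C \<alpha>(1) f\<beta>(1) unfolding club_def closed_in_def by blast
qed

lemma club_contains_closure_points_above:
  assumes r: "Card_order r" and inf: "infinite (Field r)" and reg: "regularCard r"
    and D: "dominating r D" and C: "club r C"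
  shows "\<exists>g\<in>D. \<exists>\<beta>\<in>Field r. closure_points_above r g \<beta> \<subseteq> C"
proof -
  let ?K = "Field r"
  have "\<forall>\<xi>\<in>?K. \<exists>\<gamma>. \<gamma> \<in> C \<and> strict_less r \<xi> \<gamma>"
    using C unfolding club_def unbounded_in_def by blast
  from bchoice[OF this] obtain f where f: "\<forall>\<xi>\<in>?K. f \<xi> \<in> C \<and> strict_less r \<xi> (f \<xi>)"
    by blast
  have "restrict f ?K \<in> ?K \<rightarrow>\<^sub>E ?K" using f C unfolding club_def by auto
  then obtain g where g: "g \<in> D" "le_star r (restrict f ?K) g"
    using D unfolding dominating_def by blast
  let ?E = "{\<xi> \<in> ?K. strict_less r (g \<xi>) (restrict f ?K \<xi>)}"
  have "|?E| <o |?K|" using g(2) unfolding le_star_def .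
  then obtain \<beta> where \<beta>: "\<beta> \<in> ?K" "?E \<subseteq> underS r \<beta>"
    using regularCard_bounded[OF r inf reg, of ?E] by blast
  have "\<not> strict_less r (g \<xi>) (f \<xi>)" if "\<xi> \<in> ?K" "\<not> strict_less r \<xi> \<beta>" for \<xi>
    using that \<beta>(2) by (auto simp: strict_less_iff_underS)
  then have "closure_points_above r g \<beta> \<subseteq> C"
    using closure_points_above_subset_club[OF card_order_on_well_order_on[OF r] C] f by blast
  then show ?thesis using g(1) \<beta>(1) by blast
qed

section \<open>Galvin's property from a small base\<close>

lemma card_of_UNION_ordLess_cofinality:
  assumes inf: "infinite A"
    and I: "\<And>S. cofinal_subset |A| S \<Longrightarrow> |I| <o |S|"
    and F: "\<And>i. i \<in> I \<Longrightarrow> |F i| <o |A|"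
  shows "|\<Union>i\<in>I. F i| <o |A|"
proof -
  let ?W = "|A|"
  have W: "Card_order ?W" "Well_order ?W" "Field ?W = A"
    by (rule card_of_Card_order, rule card_of_Well_order, rule Field_card_of)
  have "\<forall>i\<in>I. \<exists>x. x \<in> A \<and> |F i| \<le>o |underS ?W x|"
    using card_of_ordLeq_underS_if_ordLess[OF W(1)] F W(3) by fastforce
  from bchoice[OF this] obtain x where x: "\<forall>i\<in>I. x i \<in> A \<and> |F i| \<le>o |underS ?W (x i)|"
    by blast
  have "cofinal_subset ?W A"
    unfolding cofinal_subset_def W(3) using W(2)
    by (auto simp: order_on_defs refl_on_def Field_card_of)
  then have IA: "|I| <o |A|" by (rule I)
  have "\<not> cofinal_subset ?W (x ` I)"
  proof
    assume "cofinal_subset ?W (x ` I)"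
    then have "|I| <o |x ` I|" by (rule I)
    then show False using card_of_image not_ordLess_ordLeq by blast
  qed
  then obtain a where a: "a \<in> A" "\<forall>i\<in>I. (a, x i) \<notin> ?W"
    using x unfolding cofinal_subset_def W(3) by blast
  have "|F i| \<le>o |underS ?W a|" if i: "i \<in> I" for i
  proof -
    have "strict_less ?W (x i) a" using a x i not_strict_less_iff[OF W(2)] W(3) by blast
    then have "underS ?W (x i) \<subseteq> underS ?W a"
      using strict_less_trans[OF W(2)] by (auto simp: strict_less_iff_underS[symmetric])
    then show ?thesis using x i card_of_mono1 ordLeq_transitive by blast
  qed
  then have "|SIGMA i:I. F i| \<le>o |I \<times> underS ?W a|" by (rule card_of_Sigma_mono1[rule_format])
  moreover have "|underS ?W a| <o |A|" using card_of_underS[OF W(1)] a(1) W(3) by simp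
  then have "|I \<times> underS ?W a| <o |A|" by (rule card_of_Times_ordLess_infinite[OF inf IA])
  ultimately show ?thesis
    using card_of_UNION_Sigma ordLeq_transitive ordLeq_ordLess_trans by blast
qed

lemma Gal_if_small_base:
  fixes base :: "'i \<Rightarrow> 'a set"
  assumes inf: "infinite A"
    and I: "\<And>S. cofinal_subset |A| S \<Longrightarrow> |I| <o |S|"
    and base: "\<And>X. X \<in> F \<Longrightarrow> \<exists>i\<in>I. base i \<subseteq> X"
    and Inter: "\<And>i E. i \<in> I \<Longrightarrow> E \<noteq> {} \<Longrightarrow> E \<subseteq> F \<Longrightarrow>
      (\<And>X. X \<in> E \<Longrightarrow> base i \<subseteq> X) \<Longrightarrow> \<Inter>E \<in> F"
  shows "Gal F A A"
  unfolding Gal_def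
proof (intro allI impI)
  fix Cs assume Cs: "Cs \<subseteq> F \<and> |Cs| =o |A|"
  have "\<forall>X\<in>Cs. \<exists>i. i \<in> I \<and> base i \<subseteq> X" using Cs base by blast
  from bchoice[OF this] obtain \<phi> where \<phi>: "\<forall>X\<in>Cs. \<phi> X \<in> I \<and> base (\<phi> X) \<subseteq> X" by blast
  define fiber where "fiber i = {X \<in> Cs. \<phi> X = i}" for i
  have "\<exists>i\<in>I. \<not> |fiber i| <o |A|"
  proof (rule ccontr)
    assume "\<not> ?thesis"
    then have "|\<Union>i\<in>I. fiber i| <o |A|" using card_of_UNION_ordLess_cofinality[OF inf I] by blast
    moreover have "Cs = (\<Union>i\<in>I. fiber i)" using \<phi> unfolding fiber_def by blast
    ultimately have "|Cs| <o |A|" by simp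
    with Cs show False using not_ordLess_ordIso by blast
  qed
  then obtain i where i: "i \<in> I" and big: "\<not> |fiber i| <o |A|" by blast
  have "fiber i \<subseteq> Cs" unfolding fiber_def by blast
  then have "|fiber i| \<le>o |A|" using ordLeq_ordIso_trans[OF card_of_mono1 conjunct2[OF Cs]] by blast
  then have "|fiber i| =o |A|" using big ordLeq_iff_ordLess_or_ordIso[THEN iffD1] by blast
  have ne: "fiber i \<noteq> {}"
  proof
    assume "fiber i = {}"
    then show False using big finite_ordLess_infinite2[OF _ inf, of "fiber i"] by simp
  qed
  have "\<Inter>(fiber i) \<in> F"
  proof (rule Inter[OF i ne])
    show "fiber i \<subseteq> F" using Cs unfolding fiber_def by blast
    show "base i \<subseteq> X" if "X \<in> fiber i" for X using \<phi> that unfolding fiber_def by blast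
  qed
  with \<open>fiber i \<subseteq> Cs\<close> \<open>|fiber i| =o |A|\<close> show "\<exists>E. E \<subseteq> Cs \<and> |E| =o |A| \<and> \<Inter>E \<in> F" by blast
qed

lemma card_of_Field_ordLeq_dominating:
  assumes r: "Card_order r" and inf: "infinite (Field r)" and reg: "regularCard r"
    and D: "dominating r D"
  shows "|Field r| \<le>o |D|"
proof (rule ccontr)
  let ?K = "Field r"
  assume "\<not> |?K| \<le>o |D|"
  then have small: "|D| <o |?K|"
    using ordLess_or_ordLeq[OF card_of_Well_order card_of_Well_order] by blast
  have DF: "D \<subseteq> ?K \<rightarrow>\<^sub>E ?K" using D unfolding dominating_def by blast
  have "\<exists>y. y \<in> ?K \<and> (\<lambda>g. g \<alpha>) ` D \<subseteq> underS r y" if \<alpha>: "\<alpha> \<in> ?K" for \<alpha>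
  proof -
    have "(\<lambda>g. g \<alpha>) ` D \<subseteq> ?K" using DF \<alpha> by blast
    moreover have "|(\<lambda>g. g \<alpha>) ` D| <o |?K|" using ordLeq_ordLess_trans[OF card_of_image small] .
    ultimately show ?thesis using regularCard_bounded[OF r inf reg] by blast
  qed
  then have "\<forall>\<alpha>\<in>?K. \<exists>y. y \<in> ?K \<and> (\<lambda>g. g \<alpha>) ` D \<subseteq> underS r y" by blast
  from bchoice[OF this] obtain f
    where f: "\<forall>\<alpha>\<in>?K. f \<alpha> \<in> ?K \<and> (\<lambda>g. g \<alpha>) ` D \<subseteq> underS r (f \<alpha>)"
    by blast
  have "restrict f ?K \<in> ?K \<rightarrow>\<^sub>E ?K" using f by simp
  then obtain g where g: "g \<in> D" "le_star r (restrict f ?K) g"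
    using D unfolding dominating_def by blast
  have "{\<alpha> \<in> ?K. strict_less r (g \<alpha>) (restrict f ?K \<alpha>)} = ?K"
    using f g(1) by (auto simp: strict_less_iff_underS)
  then have "|?K| <o |?K|" using g(2) unfolding le_star_def by simp
  then show False using ordLess_irreflexive by blast
qed

lemma Inter_mem_club_filter:
  assumes "club r C" "E \<noteq> {}" "E \<subseteq> club_filter r" "\<And>X. X \<in> E \<Longrightarrow> C \<subseteq> X"
  shows "\<Inter>E \<in> club_filter r"
  using assms unfolding club_filter_def by blast

lemma Gal_club_filter_if_dominating:
  assumes r: "Card_order r" and unc: "\<not> countable (Field r)" and reg: "regularCard r"
    and D: "dominating r D" and cof: "\<And>S. cofinal_subset |Pow (Field r)| S \<Longrightarrow> |D| <o |S|"
  shows "Gal (club_filter r) (Pow (Field r)) (Pow (Field r))"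
proof (rule Gal_if_small_base[where I = "D \<times> Field r"
      and base = "\<lambda>(g, \<beta>). closure_points_above r g \<beta>"])
  let ?K = "Field r"
  have inf: "infinite ?K" using unc countable_finite by blast
  then show "infinite (Pow ?K)" by simp
  have "|D \<times> ?K| =o |D|"
    using card_of_Field_ordLeq_dominating[OF r inf reg D] inf infinite_imp_nonempty
      card_of_Times_infinite[of D ?K] card_of_ordLeq_finite by blast
  then show "|D \<times> ?K| <o |S|" if "cofinal_subset |Pow ?K| S" for S
    using cof[OF that] by (rule ordIso_ordLess_trans)
  show "\<exists>i\<in>D \<times> ?K. (case i of (g, \<beta>) \<Rightarrow> closure_points_above r g \<beta>) \<subseteq> X"
    if "X \<in> club_filter r" for X
    using that club_contains_closure_points_above[OF r inf reg D]
    unfolding club_filter_def by fastforce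
  show "\<Inter>E \<in> club_filter r"
    if i: "i \<in> D \<times> ?K" and E: "E \<noteq> {}" "E \<subseteq> club_filter r"
      and below: "\<And>X. X \<in> E \<Longrightarrow> (case i of (g, \<beta>) \<Rightarrow> closure_points_above r g \<beta>) \<subseteq> X"
    for i E
  proof -
    obtain g \<beta> where g\<beta>: "i = (g, \<beta>)" "g \<in> D" "\<beta> \<in> ?K" using i by blast
    have "\<And>\<xi>. \<xi> \<in> ?K \<Longrightarrow> g \<xi> \<in> ?K" using D g\<beta>(2) unfolding dominating_def by blast
    then have "club r (closure_points_above r g \<beta>)"
      using club_closure_points_above[OF r unc reg] g\<beta>(3) by blast
    then show ?thesis using Inter_mem_club_filter E below g\<beta>(1) by auto
  qed
qed

theorem corollary5p6:
  fixes r :: "'a rel"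
  assumes "Card_order r"
    and "\<not> countable (Field r)"
    and "|short_functions r| =o |Field r|"
    and "d_less_cf_pow r"
  shows "Gal (club_filter r) (Pow (Field r)) (Pow (Field r))"
proof -
  have "infinite (Field r)" using assms(2) countable_finite by blast
  then have "regularCard r" using regularCard_if_short_functions assms(1,3) by blast
  moreover obtain D where "dominating r D"
    and "\<And>S. cofinal_subset |Pow (Field r)| S \<Longrightarrow> |D| <o |S|"
    using assms(4) unfolding d_less_cf_pow_def by blast
  ultimately show ?thesis using Gal_club_filter_if_dominating assms(1,2) by blast
qed

end
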